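(* Suppose that $G$ is a closed graph on a compact metrizable space $X$. If $X$ can be written as a countable union of $G$-loose sets, then the poset $P_G$ is c.c.c. and adds no dominating real.
   Context: A graph $G$ on $X$ is a symmetric irreflexive relation, closed if closed in $(X\times X)\setminus$ diagonal. A set $A\subset X$ is $G$-loose if every $x\in X$ has an open neighborhood containing no elements of $A$ that are $G$-connected to $x$. A $G$-anticlique is a set with no two distinct $G$-connected points. $P_G$ is the poset of pairs $p=\langle a_p,o_p\rangle$ with $a_p\subset X$ a finite $G$-anticlique and $o_p\supset a_p$ open, ordered by $q\leq p$ iff $a_p\subset a_q$ and $o_q\subset o_p$. *)

theory Defs
  imports "HOL-Analysis.Analysis"
begin

definition graph_on :: "'a topology \<Rightarrow> ('a \<Rightarrow> 'a \<Rightarrow> bool) \<Rightarrow> bool" where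
  "graph_on T G \<longleftrightarrow>
     (\<forall>x y. G x y \<longrightarrow> x \<in> topspace T \<and> y \<in> topspace T) \<and>
     (\<forall>x y. G x y \<longrightarrow> G y x) \<and> (\<forall>x. \<not> G x x)"

definition closed_graph :: "'a topology \<Rightarrow> ('a \<Rightarrow> 'a \<Rightarrow> bool) \<Rightarrow> bool" where
  "closed_graph T G \<longleftrightarrow> graph_on T G \<and>
     closedin (subtopology (prod_topology T T)
                 {(x, y). x \<in> topspace T \<and> y \<in> topspace T \<and> x \<noteq> y})
              {(x, y). G x y}"

definition G_loose :: "'a topology \<Rightarrow> ('a \<Rightarrow> 'a \<Rightarrow> bool) \<Rightarrow> 'a set \<Rightarrow> bool" where
  "G_loose T G A \<longleftrightarrow> A \<subseteq> topspace T \<and>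
     (\<forall>x\<in>topspace T. \<exists>U. openin T U \<and> x \<in> U \<and> (\<forall>a\<in>A \<inter> U. \<not> G x a))"

definition G_anticlique :: "('a \<Rightarrow> 'a \<Rightarrow> bool) \<Rightarrow> 'a set \<Rightarrow> bool" where
  "G_anticlique G A \<longleftrightarrow> (\<forall>x\<in>A. \<forall>y\<in>A. x \<noteq> y \<longrightarrow> \<not> G x y)"

definition PG :: "'a topology \<Rightarrow> ('a \<Rightarrow> 'a \<Rightarrow> bool) \<Rightarrow> ('a set \<times> 'a set) set" where
  "PG T G = {(a, U). finite a \<and> G_anticlique G a \<and> openin T U \<and> a \<subseteq> U}"

definition PG_le :: "('a set \<times> 'a set) \<Rightarrow> ('a set \<times> 'a set) \<Rightarrow> bool" where
  "PG_le q p \<longleftrightarrow> fst p \<subseteq> fst q \<and> snd q \<subseteq> snd p"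

definition compatible :: "'p set \<Rightarrow> ('p \<Rightarrow> 'p \<Rightarrow> bool) \<Rightarrow> 'p \<Rightarrow> 'p \<Rightarrow> bool" where
  "compatible P le p q \<longleftrightarrow> (\<exists>r\<in>P. le r p \<and> le r q)"

definition antichain :: "'p set \<Rightarrow> ('p \<Rightarrow> 'p \<Rightarrow> bool) \<Rightarrow> 'p set \<Rightarrow> bool" where
  "antichain P le A \<longleftrightarrow> A \<subseteq> P \<and>
     (\<forall>p\<in>A. \<forall>q\<in>A. p \<noteq> q \<longrightarrow> \<not> compatible P le p q)"

definition ccc :: "'p set \<Rightarrow> ('p \<Rightarrow> 'p \<Rightarrow> bool) \<Rightarrow> bool" where
  "ccc P le \<longleftrightarrow> (\<forall>A. antichain P le A \<longrightarrow> countable A)"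

text \<open>A P-name for an element of \<omega>^\<omega>, coded (as usual) by the sets
  \<sigma> n m of conditions forcing "f(n) = m": for each n, conditions in
  different \<sigma> n m are incompatible, and \<Union>_m \<sigma> n m is predense.\<close>
definition real_name :: "'p set \<Rightarrow> ('p \<Rightarrow> 'p \<Rightarrow> bool) \<Rightarrow> (nat \<Rightarrow> nat \<Rightarrow> 'p set) \<Rightarrow> bool" where
  "real_name P le \<sigma> \<longleftrightarrow>
     (\<forall>n m. \<sigma> n m \<subseteq> P) \<and>
     (\<forall>n m m'. m \<noteq> m' \<longrightarrow> (\<forall>p\<in>\<sigma> n m. \<forall>p'\<in>\<sigma> n m'. \<not> compatible P le p p')) \<and>
     (\<forall>n. \<forall>r\<in>P. \<exists>s\<in>P. le s r \<and> (\<exists>m. \<exists>t\<in>\<sigma> n m. le s t))"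

definition forces_ge :: "'p set \<Rightarrow> ('p \<Rightarrow> 'p \<Rightarrow> bool) \<Rightarrow> 'p \<Rightarrow> (nat \<Rightarrow> nat \<Rightarrow> 'p set) \<Rightarrow> nat \<Rightarrow> nat \<Rightarrow> bool" where
  "forces_ge P le q \<sigma> n k \<longleftrightarrow>
     (\<forall>r\<in>P. le r q \<longrightarrow> (\<exists>s\<in>P. le s r \<and> (\<exists>m\<ge>k. \<exists>t\<in>\<sigma> n m. le s t)))"

text \<open>q forces "g \<le>* f", i.e. "\<exists>N. \<forall>n\<ge>N. g(n) \<le> f(n)", for a ground-model g.\<close>
definition forces_dominates :: "'p set \<Rightarrow> ('p \<Rightarrow> 'p \<Rightarrow> bool) \<Rightarrow> 'p \<Rightarrow> (nat \<Rightarrow> nat \<Rightarrow> 'p set) \<Rightarrow> (nat \<Rightarrow> nat) \<Rightarrow> bool" where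
  "forces_dominates P le q \<sigma> g \<longleftrightarrow>
     (\<forall>r\<in>P. le r q \<longrightarrow> (\<exists>s\<in>P. le s r \<and> (\<exists>N. \<forall>n\<ge>N. forces_ge P le s \<sigma> n (g n))))"

definition adds_dominating_real :: "'p set \<Rightarrow> ('p \<Rightarrow> 'p \<Rightarrow> bool) \<Rightarrow> bool" where
  "adds_dominating_real P le \<longleftrightarrow>
     (\<exists>\<sigma>. real_name P le \<sigma> \<and> (\<exists>q\<in>P. \<forall>g. forces_dominates P le q \<sigma> g))"

end

theory Submission
  imports Defs
begin

text \<open>
  Fix a countable basis. Each point x of a condition (a, U) gets a tag (B, C, n): x lies in the
  loose set A n, B and C are basic open sets with x \<in> B and closure B \<subseteq> C \<subseteq> U, and no point
  of A n inside B is adjacent to x; using that the graph is closed, the tags of distinct points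
  of a can be chosen with G-separated closures. The set of tags of a condition, its type,
  ranges over a countable set. Two conditions of the same type are compatible, which gives the
  c.c.c. For a sequence of conditions of a fixed type, compactness yields a cluster point of the
  tagged points; it spans a condition whose every extension is compatible with infinitely many
  terms of the sequence. For a name of a real, this bounds for each type and each n the values
  that conditions of that type can be extended to decide, and a ground-model real dominating
  these countably many bounds cannot be forced to be dominated.
\<close>

section \<open>Countably limit-linked posets\<close>

lemma ccc_if_countable_linked_cover:
  assumes "countable K"
    and cover: "\<And>p. p \<in> P \<Longrightarrow> \<exists>k\<in>K. L p k"
    and linked: "\<And>p q k. p \<in> P \<Longrightarrow> q \<in> P \<Longrightarrow> L p k \<Longrightarrow> L q k \<Longrightarrow> compatible P le p q"
  shows "ccc P le"
  unfolding ccc_def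
proof (intro allI impI)
  fix C assume C: "antichain P le C"
  then have CP: "C \<subseteq> P" by (simp add: antichain_def)
  then obtain f where f: "\<And>p. p \<in> C \<Longrightarrow> f p \<in> K \<and> L p (f p)"
    using cover by (metis subsetD)
  have "inj_on f C"
  proof (rule inj_onI, rule ccontr)
    fix p q assume "p \<in> C" "q \<in> C" "f p = f q" "p \<noteq> q"
    then show False
      using C CP f linked[of p q "f p"] unfolding antichain_def by (metis subsetD)
  qed
  moreover have "countable (f ` C)"
    using f \<open>countable K\<close> by (meson countable_subset image_subsetI)
  ultimately show "countable C" using countable_image_inj_on by blast
qed

definition admits_value_le ::
  "'p set \<Rightarrow> ('p \<Rightarrow> 'p \<Rightarrow> bool) \<Rightarrow> (nat \<Rightarrow> nat \<Rightarrow> 'p set) \<Rightarrow> nat \<Rightarrow> nat \<Rightarrow> 'p \<Rightarrow> bool" where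
  "admits_value_le P le \<sigma> n b p \<longleftrightarrow> (\<exists>r\<in>P. le r p \<and> (\<exists>m\<le>b. \<exists>t\<in>\<sigma> n m. le r t))"

lemma bounded_value_on_limit_class:
  assumes trans: "\<And>p q r. p \<in> P \<Longrightarrow> q \<in> P \<Longrightarrow> r \<in> P \<Longrightarrow> le p q \<Longrightarrow> le q r \<Longrightarrow> le p r"
    and name: "real_name P le \<sigma>"
    and limit: "\<And>ps. (\<And>m. ps m \<in> P \<and> L (ps m)) \<Longrightarrow>
      \<exists>p\<in>P. \<forall>s\<in>P. le s p \<longrightarrow> (\<forall>M::nat. \<exists>m\<ge>M. compatible P le s (ps m))"
  shows "\<exists>b. \<forall>p\<in>P. L p \<longrightarrow> admits_value_le P le \<sigma> n b p"
proof (rule ccontr)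
  assume "\<not> ?thesis"
  then obtain ps where ps: "\<And>b. ps b \<in> P \<and> L (ps b) \<and> \<not> admits_value_le P le \<sigma> n b (ps b)"
    by metis
  obtain p where "p \<in> P" and p: "\<forall>s\<in>P. le s p \<longrightarrow> (\<forall>M::nat. \<exists>m\<ge>M. compatible P le s (ps m))"
    using limit ps by blast
  obtain s m0 t0 where s: "s \<in> P" "le s p" and t0: "t0 \<in> \<sigma> n m0" "le s t0"
    using name \<open>p \<in> P\<close> unfolding real_name_def by blast
  obtain m where "m \<ge> m0" "compatible P le s (ps m)"
    using p s by blast
  then obtain r where r: "r \<in> P" "le r s" "le r (ps m)"
    unfolding compatible_def by blast
  have "t0 \<in> P" using t0 name unfolding real_name_def by blast
  then have "le r t0" using trans r s t0 by blast
  then have "admits_value_le P le \<sigma> n m (ps m)"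
    unfolding admits_value_le_def using r t0 \<open>m \<ge> m0\<close> by blast
  then show False using ps by blast
qed

lemma no_dominating_real_if_countable_limit_cover:
  fixes P :: "'p set"
  assumes refl: "\<And>p. p \<in> P \<Longrightarrow> le p p"
    and trans: "\<And>p q r. p \<in> P \<Longrightarrow> q \<in> P \<Longrightarrow> r \<in> P \<Longrightarrow> le p q \<Longrightarrow> le q r \<Longrightarrow> le p r"
    and "countable K"
    and cover: "\<And>p. p \<in> P \<Longrightarrow> \<exists>k\<in>K. L p k"
    and limit: "\<And>k ps. k \<in> K \<Longrightarrow> (\<And>m. ps m \<in> P \<and> L (ps m) k) \<Longrightarrow>
      \<exists>p\<in>P. \<forall>s\<in>P. le s p \<longrightarrow> (\<forall>M::nat. \<exists>m\<ge>M. compatible P le s (ps m))"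
  shows "\<not> adds_dominating_real P le"
proof
  assume "adds_dominating_real P le"
  then obtain \<sigma> q where name: "real_name P le \<sigma>" and "q \<in> P"
    and dom: "\<And>g. forces_dominates P le q \<sigma> g"
    unfolding adds_dominating_real_def by blast
  define k where "k = from_nat_into K"
  have "K \<noteq> {}" using cover \<open>q \<in> P\<close> by blast
  then have k: "range k = K" unfolding k_def using \<open>countable K\<close> by simp
  have "\<exists>b. \<forall>p\<in>P. L p (k i) \<longrightarrow> admits_value_le P le \<sigma> n b p" for i n
  proof (rule bounded_value_on_limit_class[OF trans name])
    fix ps :: "nat \<Rightarrow> 'p" assume "\<And>m. ps m \<in> P \<and> L (ps m) (k i)"
    then show "\<exists>p\<in>P. \<forall>s\<in>P. le s p \<longrightarrow> (\<forall>M::nat. \<exists>m\<ge>M. compatible P le s (ps m))"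
      using limit[of "k i" ps] k by blast
  qed
  then obtain b where b: "\<And>i n p. p \<in> P \<Longrightarrow> L p (k i) \<Longrightarrow> admits_value_le P le \<sigma> n (b i n) p"
    by metis
  define g where "g n = Suc (\<Sum>i\<le>n. b i n)" for n
  obtain s N where s: "s \<in> P" "le s q" and sN: "\<And>n. n \<ge> N \<Longrightarrow> forces_ge P le s \<sigma> n (g n)"
    using dom[of g] \<open>q \<in> P\<close> refl unfolding forces_dominates_def by blast
  obtain i where "L s (k i)" using cover s k by blast
  define n where "n = max N i"
  obtain r m0 t0 where r: "r \<in> P" "le r s" and "m0 \<le> b i n" and t0: "t0 \<in> \<sigma> n m0" "le r t0"
    using b[OF s(1) \<open>L s (k i)\<close>, of n] unfolding admits_value_le_def by blast
  have "b i n \<le> (\<Sum>j\<le>n. b j n)"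
    by (rule member_le_sum) (auto simp: n_def)
  then have "b i n < g n" unfolding g_def by simp
  obtain s' m t where s': "s' \<in> P" "le s' r" and "m \<ge> g n" and t: "t \<in> \<sigma> n m" "le s' t"
    using sN[of n] r unfolding forces_ge_def n_def by auto
  have "t0 \<in> P" using t0 name unfolding real_name_def by blast
  then have "compatible P le t0 t"
    unfolding compatible_def using s' t t0 r trans by blast
  moreover have "m0 \<noteq> m" using \<open>m0 \<le> b i n\<close> \<open>b i n < g n\<close> \<open>m \<ge> g n\<close> by simp
  ultimately show False using name t0 t unfolding real_name_def by blast
qed

lemma closed_graph_nonadjacent_nbhds:
  assumes "closed_graph T G" "Hausdorff_space T"
    and "x \<in> topspace T" "z \<in> topspace T" "x \<noteq> z" "\<not> G x z"
  obtains V W where "openin T V" "openin T W" "x \<in> V" "z \<in> W" "disjnt V W"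
    "\<forall>u\<in>V. \<forall>w\<in>W. \<not> G u w"
proof -
  define D where "D = {(x, y). x \<in> topspace T \<and> y \<in> topspace T \<and> x \<noteq> y}"
  define E where "E = {(x, y). G x y}"
  have "closedin (prod_topology T T) ((\<lambda>x. (x, x)) ` topspace T)"
    using \<open>Hausdorff_space T\<close> Hausdorff_space_closedin_diagonal by blast
  moreover have "D = topspace (prod_topology T T) - (\<lambda>x. (x, x)) ` topspace T"
    unfolding D_def by auto
  ultimately have D: "openin (prod_topology T T) D"
    by (simp add: closedin_def)
  have "closedin (subtopology (prod_topology T T) D) E"
    using \<open>closed_graph T G\<close> unfolding closed_graph_def D_def E_def by simp
  moreover have "topspace (subtopology (prod_topology T T) D) = D"
    unfolding D_def by auto
  ultimately have "openin (subtopology (prod_topology T T) D) (D - E)"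
    by (simp add: closedin_def)
  then have "openin (prod_topology T T) (D - E)"
    using D openin_trans_full by blast
  moreover have "(x, z) \<in> D - E"
    using assms unfolding D_def E_def by auto
  ultimately obtain V W where "openin T V" "openin T W" "x \<in> V" "z \<in> W" and VW: "V \<times> W \<subseteq> D - E"
    unfolding openin_prod_topology_alt by meson
  moreover have "disjnt V W" using VW unfolding D_def disjnt_def by blast
  moreover have "\<forall>u\<in>V. \<forall>w\<in>W. \<not> G u w" using VW unfolding E_def by blast
  ultimately show thesis using that by blast
qed

lemma finite_Ball_open_nbhd:
  assumes "finite S" "y \<in> topspace T"
    and "\<And>z. z \<in> S \<Longrightarrow> \<exists>N. openin T N \<and> y \<in> N \<and> (\<forall>w\<in>N. Q z w)"
  shows "\<exists>N. openin T N \<and> y \<in> N \<and> (\<forall>z\<in>S. \<forall>w\<in>N. Q z w)"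
  using assms
proof (induction S rule: finite_induct)
  case empty
  then show ?case by (intro exI[of _ "topspace T"]) auto
next
  case (insert a S)
  then obtain N1 where "openin T N1" "y \<in> N1" "\<forall>z\<in>S. \<forall>w\<in>N1. Q z w" by auto
  moreover obtain N2 where "openin T N2" "y \<in> N2" "\<forall>w\<in>N2. Q a w" using insert.prems by blast
  ultimately show ?case by (intro exI[of _ "N1 \<inter> N2"]) auto
qed

lemma anticlique_separating_nbhds:
  assumes "closed_graph T G" "Hausdorff_space T"
    and "finite a" "a \<subseteq> topspace T" "G_anticlique G a"
  obtains N where "\<And>x. x \<in> a \<Longrightarrow> openin T (N x) \<and> x \<in> N x"
    "\<And>x x'. x \<in> a \<Longrightarrow> x' \<in> a \<Longrightarrow> x \<noteq> x' \<Longrightarrow>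
      disjnt (N x) (N x') \<and> (\<forall>u\<in>N x. \<forall>w\<in>N x'. \<not> G u w)"
proof -
  define separating where "separating x x' V W \<longleftrightarrow> openin T V \<and> openin T W \<and>
      x \<in> V \<and> x' \<in> W \<and> disjnt V W \<and> (\<forall>u\<in>V. \<forall>w\<in>W. \<not> G u w)" for x x' V W
  have "\<exists>V W. separating x x' V W" if "x \<in> a" "x' \<in> a" "x \<noteq> x'" for x x'
  proof -
    have "\<not> G x x'" using assms(5) that unfolding G_anticlique_def by blast
    moreover have "x \<in> topspace T" "x' \<in> topspace T" using assms(4) that by auto
    ultimately obtain V W where "openin T V" "openin T W" "x \<in> V" "x' \<in> W" "disjnt V W"
      "\<forall>u\<in>V. \<forall>w\<in>W. \<not> G u w"
      using closed_graph_nonadjacent_nbhds[OF assms(1,2)] \<open>x \<noteq> x'\<close> by blast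
    then show ?thesis unfolding separating_def by blast
  qed
  then obtain V W where VW: "\<And>x x'. x \<in> a \<Longrightarrow> x' \<in> a \<Longrightarrow> x \<noteq> x' \<Longrightarrow>
      separating x x' (V x x') (W x x')"
    by metis
  have "\<exists>N. openin T N \<and> x \<in> N \<and> (\<forall>x'\<in>a - {x}. \<forall>w\<in>N. w \<in> V x x' \<inter> W x' x)"
    if "x \<in> a" for x
  proof (rule finite_Ball_open_nbhd)
    fix x' assume "x' \<in> a - {x}"
    then show "\<exists>N. openin T N \<and> x \<in> N \<and> (\<forall>w\<in>N. w \<in> V x x' \<inter> W x' x)"
      using VW[of x x'] VW[of x' x] that unfolding separating_def
      by (intro exI[of _ "V x x' \<inter> W x' x"]) auto
  qed (use assms that in auto)
  then obtain N where N: "\<And>x. x \<in> a \<Longrightarrow> openin T (N x) \<and> x \<in> N x \<and>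
      (\<forall>x'\<in>a - {x}. \<forall>w\<in>N x. w \<in> V x x' \<inter> W x' x)"
    using bchoice[of a] by (metis (no_types, lifting))
  show thesis
  proof (rule that)
    fix x x' assume "x \<in> a" "x' \<in> a" "x \<noteq> x'"
    then have "N x \<subseteq> V x x'" "N x' \<subseteq> W x x'" using N by blast+
    then show "disjnt (N x) (N x') \<and> (\<forall>u\<in>N x. \<forall>w\<in>N x'. \<not> G u w)"
      using VW[OF \<open>x \<in> a\<close> \<open>x' \<in> a\<close> \<open>x \<noteq> x'\<close>] unfolding separating_def disjnt_def
      by blast
  qed (use N in blast)
qed

lemma regular_basis_closure_shrink:
  assumes "regular_space T" "\<And>V. V \<in> Bs \<Longrightarrow> openin T V"
    and basis: "\<And>U x. openin T U \<Longrightarrow> x \<in> U \<Longrightarrow> \<exists>V\<in>Bs. x \<in> V \<and> V \<subseteq> U"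
    and "openin T W" "x \<in> W"
  obtains B C where "B \<in> Bs" "C \<in> Bs" "x \<in> B" "T closure_of B \<subseteq> C" "C \<subseteq> W"
proof -
  obtain C where C: "C \<in> Bs" "x \<in> C" "C \<subseteq> W" using basis assms(4,5) by blast
  have "neighbourhood_base_of (closedin T) T"
    using assms(1) neighbourhood_base_of_closedin by blast
  then obtain U K where UK: "openin T U" "closedin T K" "x \<in> U" "U \<subseteq> K" "K \<subseteq> C"
    using C assms(2) unfolding neighbourhood_base_of by metis
  obtain B where B: "B \<in> Bs" "x \<in> B" "B \<subseteq> U" using basis[OF UK(1,3)] by blast
  have "T closure_of B \<subseteq> K" using B(3) UK(2,4) by (intro closure_of_minimal) auto
  with UK(5) have "T closure_of B \<subseteq> C" by (rule order_trans[rotated])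
  then show thesis using that B C by blast
qed

lemma (in Metric_space) mtotally_bounded_imp_second_countable:
  assumes "mtotally_bounded M"
  shows "second_countable mtopology"
proof -
  have "\<exists>K. finite K \<and> K \<subseteq> M \<and> M \<subseteq> (\<Union>c\<in>K. mball c (1 / Suc n))" for n
    using assms unfolding mtotally_bounded_def by simp
  then obtain F where F: "\<And>n. finite (F n) \<and> F n \<subseteq> M \<and> M \<subseteq> (\<Union>c\<in>F n. mball c (1 / Suc n))"
    using choice[of "\<lambda>n K. finite K \<and> K \<subseteq> M \<and> M \<subseteq> (\<Union>c\<in>K. mball c (1 / Suc n))"] by blast
  define B where "B = (\<Union>n. (\<lambda>c. mball c (1 / Suc n)) ` F n)"
  have "countable B" unfolding B_def using F by (auto intro: countable_finite)
  moreover have "\<exists>V\<in>B. x \<in> V \<and> V \<subseteq> U" if U: "openin mtopology U" "x \<in> U" for U x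
  proof -
    have "x \<in> M" using U openin_mtopology by blast
    obtain r where "r > 0" "mball x r \<subseteq> U"
      using U unfolding openin_mtopology by blast
    obtain n where "inverse (Suc n) < r / 2"
      using reals_Archimedean \<open>r > 0\<close> half_gt_zero by blast
    then have n: "2 / Suc n < r" by (simp add: field_simps)
    obtain c where c: "c \<in> F n" "x \<in> mball c (1 / Suc n)" using F[of n] \<open>x \<in> M\<close> by blast
    have "mball c (1 / Suc n) \<subseteq> mball x r"
    proof
      fix w assume w: "w \<in> mball c (1 / Suc n)"
      have "d x w \<le> d x c + d c w" using c w triangle by auto
      also have "\<dots> < 2 / Suc n" using c w by (auto simp: commute)
      finally show "w \<in> mball x r" using n w \<open>x \<in> M\<close> by auto
    qed
    then show ?thesis using c \<open>mball x r \<subseteq> U\<close> unfolding B_def by blast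
  qed
  ultimately show ?thesis unfolding second_countable_def B_def by auto
qed

lemma compact_space_finite_power_cluster_point:
  fixes x :: "nat \<Rightarrow> 'i \<Rightarrow> 'a"
  assumes "compact_space T" "finite I" "\<And>m i. i \<in> I \<Longrightarrow> x m i \<in> topspace T"
  obtains y where "\<And>i. i \<in> I \<Longrightarrow> y i \<in> topspace T"
    "\<And>W M. (\<And>i. i \<in> I \<Longrightarrow> openin T (W i) \<and> y i \<in> W i) \<Longrightarrow> \<exists>m\<ge>M. \<forall>i\<in>I. x m i \<in> W i"
proof -
  define PT where "PT = product_topology (\<lambda>i. T) I"
  define z where "z m = restrict (x m) I" for m
  define C where "C n = PT closure_of (z ` {n..})" for n
  have z: "z ` {n..} \<subseteq> topspace PT" for n unfolding PT_def z_def using assms(3) by auto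
  have "compact_space PT"
    unfolding PT_def using assms(1) by (simp add: compact_space_product_topology)
  moreover have "C n \<noteq> {}" for n
    using closure_of_subset[OF z, of n] unfolding C_def by auto
  moreover have "decseq C" unfolding decseq_def C_def by (auto intro!: closure_of_mono)
  ultimately have "(\<Inter>n. C n) \<noteq> {}"
    using compact_space_imp_nest[of PT C] unfolding C_def by auto
  then obtain y where y: "\<And>n. y \<in> C n" by auto
  have yt: "y \<in> topspace PT"
    using closure_of_subset_topspace[of PT "z ` {0..}"] y[of 0] unfolding C_def by blast
  show thesis
  proof (rule that)
    show "y i \<in> topspace T" if "i \<in> I" for i using yt that unfolding PT_def by auto
    fix W M assume W: "\<And>i. i \<in> I \<Longrightarrow> openin T (W i) \<and> y i \<in> W i"
    have "openin PT (PiE I W)" unfolding PT_def using W assms(2) by (simp add: openin_PiE_gen)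
    moreover have "y \<in> PiE I W" using yt W unfolding PT_def by (auto simp: PiE_iff)
    ultimately obtain w where "w \<in> z ` {M..}" "w \<in> PiE I W"
      using y[of M] unfolding C_def in_closure_of by blast
    then show "\<exists>m\<ge>M. \<forall>i\<in>I. x m i \<in> W i" unfolding z_def by (auto simp: Pi_iff)
  qed
qed

lemma cluster_point_in_closure:
  fixes x :: "nat \<Rightarrow> 'i \<Rightarrow> 'a"
  assumes "\<And>i. i \<in> I \<Longrightarrow> y i \<in> topspace T"
    and cluster: "\<And>W M. (\<And>i. i \<in> I \<Longrightarrow> openin T (W i) \<and> y i \<in> W i) \<Longrightarrow>
      \<exists>m\<ge>M. \<forall>i\<in>I. x m i \<in> W i"
    and "i \<in> I" "\<And>m. x m i \<in> S"
  shows "y i \<in> T closure_of S"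
  unfolding in_closure_of
proof (intro conjI allI impI)
  show "y i \<in> topspace T" using assms(1,3) .
  fix V assume V: "y i \<in> V \<and> openin T V"
  define W where "W j = (if j = i then V else topspace T)" for j
  obtain m where "\<forall>j\<in>I. x m j \<in> W j"
    using cluster[of W 0] assms(1) V unfolding W_def by fastforce
  then show "\<exists>y. y \<in> S \<and> y \<in> V" using assms(3,4) unfolding W_def by fastforce
qed

lemma loose_anticlique_nbhd:
  assumes "closed_graph T G" "Hausdorff_space T" "G_loose T G L"
    and "a \<subseteq> topspace T" "finite a" "G_anticlique G a" "y \<in> a"
  obtains N where "openin T N" "y \<in> N" "\<forall>w\<in>N \<inter> L. \<forall>z\<in>a. \<not> G z w"
proof -
  have yT: "y \<in> topspace T" using assms(4,7) by blast
  have "\<exists>N. openin T N \<and> y \<in> N \<and> (\<forall>z\<in>a. \<forall>w\<in>N. w \<in> L \<longrightarrow> \<not> G z w)"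
  proof (rule finite_Ball_open_nbhd[OF assms(5) yT])
    fix z assume "z \<in> a"
    show "\<exists>N. openin T N \<and> y \<in> N \<and> (\<forall>w\<in>N. w \<in> L \<longrightarrow> \<not> G z w)"
    proof (cases "z = y")
      case True
      obtain N where "openin T N" "y \<in> N" "\<forall>w\<in>L \<inter> N. \<not> G y w"
        using assms(3) yT unfolding G_loose_def by blast
      then show ?thesis using True by blast
    next
      case False
      have zT: "z \<in> topspace T" using assms(4) \<open>z \<in> a\<close> by blast
      have nG: "\<not> G z y" using assms(6,7) \<open>z \<in> a\<close> False unfolding G_anticlique_def by blast
      obtain V W where "openin T V" "openin T W" "z \<in> V" "y \<in> W" "disjnt V W"
        "\<forall>u\<in>V. \<forall>w\<in>W. \<not> G u w"
        by (rule closed_graph_nonadjacent_nbhds[OF assms(1,2) zT yT False nG])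
      then show ?thesis using \<open>z \<in> V\<close> by blast
    qed
  qed
  then obtain N where "openin T N" "y \<in> N" "\<forall>z\<in>a. \<forall>w\<in>N. w \<in> L \<longrightarrow> \<not> G z w"
    by blast
  then show thesis using that by blast
qed

section \<open>Types of conditions of \<open>P\<^sub>G\<close>\<close>

lemma PG_le_refl: "PG_le p p"
  unfolding PG_le_def by simp

lemma PG_le_trans: "PG_le p q \<Longrightarrow> PG_le q r \<Longrightarrow> PG_le p r"
  unfolding PG_le_def by auto

lemma PG_compatible_if_nonadjacent:
  assumes "(a, U) \<in> PG T G" "(b, V) \<in> PG T G" "a \<subseteq> V" "b \<subseteq> U"
    and "\<And>x y. x \<in> a \<Longrightarrow> y \<in> b \<Longrightarrow> \<not> G x y \<and> \<not> G y x"
  shows "compatible (PG T G) PG_le (a, U) (b, V)"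
  unfolding compatible_def
proof (rule bexI[of _ "(a \<union> b, U \<inter> V)"])
  show "(a \<union> b, U \<inter> V) \<in> PG T G"
    using assms unfolding PG_def G_anticlique_def by auto
qed (auto simp: PG_le_def)

locale loose_cover =
  fixes T :: "'a topology" and G :: "'a \<Rightarrow> 'a \<Rightarrow> bool"
    and A :: "nat \<Rightarrow> 'a set" and Bs :: "'a set set"
  assumes compact: "compact_space T" and regular: "regular_space T"
    and Hausdorff: "Hausdorff_space T" and closed: "closed_graph T G"
    and loose: "\<And>n. G_loose T G (A n)" and cover: "topspace T = (\<Union>n. A n)"
    and countable_basis: "countable Bs" and basis_open: "\<And>V. V \<in> Bs \<Longrightarrow> openin T V"
    and basis: "\<And>U x. openin T U \<Longrightarrow> x \<in> U \<Longrightarrow> \<exists>V\<in>Bs. x \<in> V \<and> V \<subseteq> U"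
begin

lemma G_sym: "G x y \<Longrightarrow> G y x"
  using closed unfolding closed_graph_def graph_on_def by blast

definition is_tag :: "'a set \<Rightarrow> 'a \<Rightarrow> 'a set \<times> 'a set \<times> nat \<Rightarrow> bool" where
  "is_tag U x e \<longleftrightarrow> (case e of (B, C, n) \<Rightarrow> B \<in> Bs \<and> C \<in> Bs \<and> x \<in> B \<and>
     T closure_of B \<subseteq> C \<and> C \<subseteq> U \<and> x \<in> A n \<and> (\<forall>w\<in>A n \<inter> B. \<not> G x w))"

definition separated_tags :: "('a set \<times> 'a set \<times> nat) set \<Rightarrow> bool" where
  "separated_tags \<tau> \<longleftrightarrow> (\<forall>e\<in>\<tau>. \<forall>e'\<in>\<tau>. e \<noteq> e' \<longrightarrow>
     (\<forall>u\<in>T closure_of fst e. \<forall>w\<in>T closure_of fst e'. \<not> G u w))"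

definition has_type :: "'a set \<times> 'a set \<Rightarrow> ('a set \<times> 'a set \<times> nat) set \<Rightarrow> bool" where
  "has_type p \<tau> \<longleftrightarrow> separated_tags \<tau> \<and> (\<exists>x. fst p = x ` \<tau> \<and> (\<forall>e\<in>\<tau>. is_tag (snd p) (x e) e))"

definition types :: "('a set \<times> 'a set \<times> nat) set set" where
  "types = {\<tau>. finite \<tau> \<and> \<tau> \<subseteq> Bs \<times> Bs \<times> UNIV}"

lemma countable_types: "countable types"
  unfolding types_def using countable_basis
  by (intro countable_Collect_finite_subset countable_SIGMA) auto

lemma is_tag_closure:
  assumes "is_tag U x (B, C, n)"
  shows "x \<in> T closure_of B"
proof -
  have "B \<in> Bs" "x \<in> B" using assms unfolding is_tag_def by auto
  then show ?thesis by (meson basis_open closure_of_subset openin_subset subsetD)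
qed

lemma has_type_point_tag:
  assumes "has_type (a, U) \<tau>" "x \<in> a"
  obtains B C n where "(B, C, n) \<in> \<tau>" "is_tag U x (B, C, n)"
proof -
  obtain f where "a = f ` \<tau>" "\<forall>e\<in>\<tau>. is_tag U (f e) e"
    using assms(1) unfolding has_type_def fst_conv snd_conv by blast
  then obtain e where "e \<in> \<tau>" "is_tag U x e" using assms(2) by blast
  moreover obtain B C n where "e = (B, C, n)" by (cases e)
  ultimately show thesis using that by blast
qed

lemma has_type_tag_point:
  assumes "has_type (a, U) \<tau>" "e \<in> \<tau>"
  obtains x where "x \<in> a" "is_tag U x e"
proof -
  obtain f where "a = f ` \<tau>" "\<forall>e\<in>\<tau>. is_tag U (f e) e"
    using assms(1) unfolding has_type_def fst_conv snd_conv by blast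
  then show thesis using that assms(2) by blast
qed

lemma tag_exists:
  assumes "openin T V" "x \<in> V" "V \<subseteq> U"
  shows "\<exists>e. is_tag U x e \<and> T closure_of fst e \<subseteq> V"
proof -
  have x: "x \<in> topspace T" using assms(1,2) openin_subset by blast
  obtain n where "x \<in> A n" using cover x by blast
  moreover obtain W where "openin T W" "x \<in> W" "\<forall>w\<in>A n \<inter> W. \<not> G x w"
    using loose[of n] x unfolding G_loose_def by blast
  moreover obtain B C where "B \<in> Bs" "C \<in> Bs" "x \<in> B" "T closure_of B \<subseteq> C" "C \<subseteq> V \<inter> W"
    by (rule regular_basis_closure_shrink[OF regular basis_open basis, of "V \<inter> W" x])
      (use assms calculation in auto)
  moreover have "B \<subseteq> W"
    using closure_of_subset[OF openin_subset[OF basis_open[OF \<open>B \<in> Bs\<close>]]] calculation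
    by blast
  ultimately have "is_tag U x (B, C, n) \<and> T closure_of B \<subseteq> V"
    using assms(3) unfolding is_tag_def by auto
  then show ?thesis by auto
qed

lemma has_type_exists:
  assumes "(a, U) \<in> PG T G"
  shows "\<exists>\<tau>\<in>types. has_type (a, U) \<tau>"
proof -
  have a: "finite a" "G_anticlique G a" "openin T U" "a \<subseteq> U"
    using assms unfolding PG_def by auto
  then have aT: "a \<subseteq> topspace T" using openin_subset by blast
  obtain N where N: "\<And>x. x \<in> a \<Longrightarrow> openin T (N x) \<and> x \<in> N x"
    "\<And>x x'. x \<in> a \<Longrightarrow> x' \<in> a \<Longrightarrow> x \<noteq> x' \<Longrightarrow>
      disjnt (N x) (N x') \<and> (\<forall>u\<in>N x. \<forall>w\<in>N x'. \<not> G u w)"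
    using anticlique_separating_nbhds[OF closed Hausdorff a(1) aT a(2)] by blast
  have "\<exists>e. is_tag U x e \<and> T closure_of fst e \<subseteq> N x" if "x \<in> a" for x
  proof -
    have "openin T (U \<inter> N x)" "x \<in> U \<inter> N x" using a N that by auto
    from tag_exists[OF this Int_lower1] show ?thesis by blast
  qed
  then have "\<forall>x\<in>a. \<exists>e. is_tag U x e \<and> T closure_of fst e \<subseteq> N x" by blast
  then obtain h where h: "\<And>x. x \<in> a \<Longrightarrow> is_tag U x (h x) \<and> T closure_of fst (h x) \<subseteq> N x"
    using bchoice by metis
  have h_closure: "x \<in> T closure_of fst (h x)" if "x \<in> a" for x
    using h[OF that] is_tag_closure by (cases "h x") auto
  have "inj_on h a"
  proof (rule inj_onI, rule ccontr)
    fix x x' assume "x \<in> a" "x' \<in> a" "h x = h x'" "x \<noteq> x'"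
    then have "x' \<in> N x" using h h_closure by (metis subsetD)
    then show False using N \<open>x \<in> a\<close> \<open>x' \<in> a\<close> \<open>x \<noteq> x'\<close> unfolding disjnt_def by blast
  qed
  then have "a = inv_into a h ` h ` a" "\<forall>e\<in>h ` a. is_tag U (inv_into a h e) e"
    using h by (auto simp: inv_into_image_cancel)
  moreover have "separated_tags (h ` a)"
    unfolding separated_tags_def
  proof (intro ballI impI)
    fix e e' u w assume "e \<in> h ` a" "e' \<in> h ` a" "e \<noteq> e'"
      and "u \<in> T closure_of fst e" "w \<in> T closure_of fst e'"
    then obtain x x' where "x \<in> a" "x' \<in> a" "x \<noteq> x'"
      "u \<in> T closure_of fst (h x)" "w \<in> T closure_of fst (h x')"
      by blast
    then show "\<not> G u w" using h N(2) by blast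
  qed
  ultimately have "has_type (a, U) (h ` a)" unfolding has_type_def by auto
  moreover have "h x \<in> Bs \<times> Bs \<times> UNIV" if "x \<in> a" for x
    using h[OF that] unfolding is_tag_def by (cases "h x") auto
  then have "h ` a \<in> types" unfolding types_def using a(1) by blast
  ultimately show ?thesis by blast
qed

lemma same_type_nonadjacent:
  assumes "has_type (a, U) \<tau>" "has_type (b, V) \<tau>" "x \<in> a" "y \<in> b"
  shows "\<not> G x y"
proof -
  obtain B C n where e: "(B, C, n) \<in> \<tau>" "is_tag U x (B, C, n)"
    using has_type_point_tag[OF assms(1,3)] .
  obtain B' C' n' where e': "(B', C', n') \<in> \<tau>" "is_tag V y (B', C', n')"
    using has_type_point_tag[OF assms(2,4)] .
  show ?thesis
  proof (cases "(B, C, n) = (B', C', n')")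
    case True
    then have "y \<in> A n \<inter> B" using e'(2) unfolding is_tag_def by simp
    then show ?thesis using e(2) unfolding is_tag_def by simp
  next
    case False
    have "separated_tags \<tau>" using assms(1) unfolding has_type_def by blast
    then have "\<forall>u\<in>T closure_of B. \<forall>w\<in>T closure_of B'. \<not> G u w"
      using e(1) e'(1) False unfolding separated_tags_def by fastforce
    then show ?thesis using is_tag_closure[OF e(2)] is_tag_closure[OF e'(2)] by blast
  qed
qed

lemma same_type_subset:
  assumes "has_type (a, U) \<tau>" "has_type (b, V) \<tau>"
  shows "a \<subseteq> V"
proof
  fix x assume "x \<in> a"
  then obtain B C n where e: "(B, C, n) \<in> \<tau>" "is_tag U x (B, C, n)"
    using has_type_point_tag[OF assms(1)] by blast
  obtain y where "is_tag V y (B, C, n)" using has_type_tag_point[OF assms(2) e(1)] by blast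
  then have "T closure_of B \<subseteq> V" unfolding is_tag_def by auto
  then show "x \<in> V" using is_tag_closure[OF e(2)] by blast
qed

lemma same_type_compatible:
  assumes "p \<in> PG T G" "q \<in> PG T G" "has_type p \<tau>" "has_type q \<tau>"
  shows "compatible (PG T G) PG_le p q"
proof -
  obtain a U b V where pq: "p = (a, U)" "q = (b, V)" by fastforce
  show ?thesis
    unfolding pq
  proof (rule PG_compatible_if_nonadjacent)
    show "a \<subseteq> V" "b \<subseteq> U" using assms(3,4) same_type_subset unfolding pq by blast+
    show "\<not> G x y \<and> \<not> G y x" if "x \<in> a" "y \<in> b" for x y
      using assms(3,4) same_type_nonadjacent that unfolding pq by blast
  qed (use assms pq in auto)
qed

lemma condition_tag_nbhds:
  assumes "(as, Us) \<in> PG T G" "y ` \<tau> \<subseteq> as"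
  obtains N where "\<And>e. e \<in> \<tau> \<Longrightarrow> openin T (N e) \<and> y e \<in> N e \<and> N e \<subseteq> Us \<and>
    (\<forall>w\<in>N e \<inter> A (snd (snd e)). \<forall>z\<in>as. \<not> G z w)"
proof -
  have as: "finite as" "G_anticlique G as" "openin T Us" "as \<subseteq> Us"
    using assms(1) unfolding PG_def by auto
  then have asT: "as \<subseteq> topspace T" using openin_subset by blast
  have "\<exists>N. openin T N \<and> y e \<in> N \<and> N \<subseteq> Us \<and> (\<forall>w\<in>N \<inter> A (snd (snd e)). \<forall>z\<in>as. \<not> G z w)"
    if e: "e \<in> \<tau>" for e
  proof -
    obtain N where "openin T N" "y e \<in> N" "\<forall>w\<in>N \<inter> A (snd (snd e)). \<forall>z\<in>as. \<not> G z w"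
      by (rule loose_anticlique_nbhd[OF closed Hausdorff loose asT as(1,2)]) (use assms(2) e in blast)
    then show ?thesis using as assms(2) e by (intro exI[of _ "N \<inter> Us"]) auto
  qed
  then have "\<forall>e\<in>\<tau>. \<exists>N. openin T N \<and> y e \<in> N \<and> N \<subseteq> Us \<and>
      (\<forall>w\<in>N \<inter> A (snd (snd e)). \<forall>z\<in>as. \<not> G z w)" by blast
  from bchoice[OF this] obtain N where "\<forall>e\<in>\<tau>. openin T (N e) \<and> y e \<in> N e \<and> N e \<subseteq> Us \<and>
      (\<forall>w\<in>N e \<inter> A (snd (snd e)). \<forall>z\<in>as. \<not> G z w)" by blast
  then show thesis by (intro that) blast
qed

lemma same_type_cluster_limit:
  fixes ps :: "nat \<Rightarrow> 'a set \<times> 'a set"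
  assumes "\<tau> \<in> types" and ps: "\<And>m. ps m \<in> PG T G \<and> has_type (ps m) \<tau>"
  obtains pt y where "\<And>m. fst (ps m) = pt m ` \<tau>" "\<And>m e. e \<in> \<tau> \<Longrightarrow> is_tag (snd (ps m)) (pt m e) e"
    "\<And>W M. (\<And>e. e \<in> \<tau> \<Longrightarrow> openin T (W e) \<and> y e \<in> W e) \<Longrightarrow> \<exists>m\<ge>M. \<forall>e\<in>\<tau>. pt m e \<in> W e"
    "(y ` \<tau>, \<Union>e\<in>\<tau>. fst (snd e)) \<in> PG T G"
proof -
  have "\<forall>m. \<exists>x. fst (ps m) = x ` \<tau> \<and> (\<forall>e\<in>\<tau>. is_tag (snd (ps m)) (x e) e)"
    using ps unfolding has_type_def by blast
  from choice[OF this] obtain pt where pt: "\<And>m. fst (ps m) = pt m ` \<tau>"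
    "\<And>m e. e \<in> \<tau> \<Longrightarrow> is_tag (snd (ps m)) (pt m e) e"
    by blast
  have fin: "finite \<tau>" using assms(1) unfolding types_def by blast
  have pt_T: "pt m e \<in> topspace T" if "e \<in> \<tau>" for m e
  proof -
    have "fst (ps m) \<subseteq> snd (ps m)" "openin T (snd (ps m))"
      using ps[of m] unfolding PG_def by (cases "ps m"; auto)+
    then show ?thesis using openin_subset pt(1)[of m] that by blast
  qed
  obtain y where yT: "\<And>e. e \<in> \<tau> \<Longrightarrow> y e \<in> topspace T"
    and cluster: "\<And>W M. (\<And>e. e \<in> \<tau> \<Longrightarrow> openin T (W e) \<and> y e \<in> W e) \<Longrightarrow>
      \<exists>m\<ge>M. \<forall>e\<in>\<tau>. pt m e \<in> W e"
    using compact_space_finite_power_cluster_point[OF compact fin, where x = pt, OF pt_T] by blast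
  have y: "y e \<in> T closure_of fst e \<and> y e \<in> fst (snd e) \<and> openin T (fst (snd e))"
    if "e \<in> \<tau>" for e
  proof -
    obtain B C n where e: "e = (B, C, n)" by (cases e)
    have pt_B: "pt m e \<in> B" for m using pt(2)[OF that, of m] unfolding e is_tag_def by simp
    have "y e \<in> T closure_of B"
      by (rule cluster_point_in_closure[where x = pt and y = y and I = \<tau>, OF yT cluster that pt_B])
    moreover have "T closure_of B \<subseteq> C" "C \<in> Bs"
      using pt(2)[OF that, of 0] unfolding e is_tag_def by auto
    ultimately show ?thesis unfolding e using basis_open by auto
  qed
  have "G_anticlique G (y ` \<tau>)"
    unfolding G_anticlique_def
  proof (intro ballI impI)
    fix u w assume "u \<in> y ` \<tau>" "w \<in> y ` \<tau>" "u \<noteq> w"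
    then obtain e e' where "e \<in> \<tau>" "e' \<in> \<tau>" "e \<noteq> e'" "u = y e" "w = y e'" by blast
    moreover have "separated_tags \<tau>" using ps[of 0] unfolding has_type_def by blast
    ultimately show "\<not> G u w" using y unfolding separated_tags_def by blast
  qed
  then have "(y ` \<tau>, \<Union>e\<in>\<tau>. fst (snd e)) \<in> PG T G"
    unfolding PG_def using fin y by (auto intro!: openin_Union)
  then show thesis using that pt cluster by blast
qed

lemma same_type_limit:
  fixes ps :: "nat \<Rightarrow> 'a set \<times> 'a set"
  assumes "\<tau> \<in> types" and ps: "\<And>m. ps m \<in> PG T G \<and> has_type (ps m) \<tau>"
  shows "\<exists>p\<in>PG T G. \<forall>s\<in>PG T G. PG_le s p \<longrightarrow>
    (\<forall>M::nat. \<exists>m\<ge>M. compatible (PG T G) PG_le s (ps m))"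
proof -
  obtain pt y where pt: "\<And>m. fst (ps m) = pt m ` \<tau>"
      "\<And>m e. e \<in> \<tau> \<Longrightarrow> is_tag (snd (ps m)) (pt m e) e"
    and cluster: "\<And>W M. (\<And>e. e \<in> \<tau> \<Longrightarrow> openin T (W e) \<and> y e \<in> W e) \<Longrightarrow>
      \<exists>m\<ge>M. \<forall>e\<in>\<tau>. pt m e \<in> W e"
    and limit: "(y ` \<tau>, \<Union>e\<in>\<tau>. fst (snd e)) \<in> PG T G"
    using same_type_cluster_limit[where ps = ps, OF assms] by blast
  have compatible: "\<exists>m\<ge>M. compatible (PG T G) PG_le (as, Us) (ps m)"
    if s: "(as, Us) \<in> PG T G" "PG_le (as, Us) (y ` \<tau>, \<Union>e\<in>\<tau>. fst (snd e))" for as Us M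
  proof -
    have "y ` \<tau> \<subseteq> as" and Us: "Us \<subseteq> (\<Union>e\<in>\<tau>. fst (snd e))"
      using s(2) unfolding PG_le_def by auto
    then obtain N where N: "\<And>e. e \<in> \<tau> \<Longrightarrow> openin T (N e) \<and> y e \<in> N e \<and> N e \<subseteq> Us \<and>
        (\<forall>w\<in>N e \<inter> A (snd (snd e)). \<forall>z\<in>as. \<not> G z w)"
      using condition_tag_nbhds[OF s(1)] by blast
    obtain m where "m \<ge> M" and m: "\<forall>e\<in>\<tau>. pt m e \<in> N e" using cluster[of N M] N by blast
    obtain a U where psm: "ps m = (a, U)" by fastforce
    have near: "x \<in> Us \<and> (\<forall>z\<in>as. \<not> G z x)" if x: "x \<in> a" for x
    proof -
      obtain e where e: "e \<in> \<tau>" "x = pt m e" using pt(1)[of m] psm x by auto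
      have "x \<in> A (snd (snd e))" using pt(2)[OF e(1), of m] e(2) unfolding is_tag_def by (cases e) auto
      then show ?thesis using N m e by blast
    qed
    have "compatible (PG T G) PG_le (as, Us) (a, U)"
    proof (rule PG_compatible_if_nonadjacent)
      have "fst (snd e) \<subseteq> U" if "e \<in> \<tau>" for e
        using pt(2)[OF that, of m] psm unfolding is_tag_def by (cases e) auto
      moreover have "as \<subseteq> Us" using s(1) unfolding PG_def by blast
      ultimately show "as \<subseteq> U" using Us by blast
      show "a \<subseteq> Us" using near by blast
      show "\<not> G z x \<and> \<not> G x z" if "z \<in> as" "x \<in> a" for z x using near that G_sym by blast
    qed (use s ps[of m] psm in auto)
    then show ?thesis using \<open>m \<ge> M\<close> psm by auto
  qed
  show ?thesis
  proof (intro bexI[OF _ limit] ballI impI allI)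
    fix s M assume "s \<in> PG T G" "PG_le s (y ` \<tau>, \<Union>e\<in>\<tau>. fst (snd e))"
    then show "\<exists>m\<ge>M. compatible (PG T G) PG_le s (ps m)" using compatible by (cases s) blast
  qed
qed

end

theorem corollary3p9:
  fixes T :: "'a topology" and G :: "'a \<Rightarrow> 'a \<Rightarrow> bool"
  assumes "compact_space T" and "metrizable_space T"
    and "closed_graph T G"
    and "\<exists>A :: nat \<Rightarrow> 'a set. (\<forall>n. G_loose T G (A n)) \<and> topspace T = (\<Union>n. A n)"
  shows "ccc (PG T G) PG_le \<and> \<not> adds_dominating_real (PG T G) PG_le"
proof -
  obtain A :: "nat \<Rightarrow> 'a set" where A: "\<And>n. G_loose T G (A n)" "topspace T = (\<Union>n. A n)"
    using assms(4) by blast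
  obtain M d where "Metric_space M d" "T = Metric_space.mtopology M d"
    using assms(2) unfolding metrizable_space_def by blast
  then have "second_countable T"
    using assms(1) Metric_space.compact_space_eq_mcomplete_mtotally_bounded
      Metric_space.mtotally_bounded_imp_second_countable by metis
  then obtain Bs where "countable Bs" "\<And>V. V \<in> Bs \<Longrightarrow> openin T V"
    "\<And>U x. openin T U \<Longrightarrow> x \<in> U \<Longrightarrow> \<exists>V\<in>Bs. x \<in> V \<and> V \<subseteq> U"
    unfolding second_countable_def by metis
  then interpret loose_cover T G A Bs
    using assms(1,2,3) A metrizable_imp_regular_space metrizable_imp_Hausdorff_space
    by unfold_locales auto
  have cover: "\<exists>\<tau>\<in>types. has_type p \<tau>" if "p \<in> PG T G" for p
    using has_type_exists that by (cases p) auto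
  have "ccc (PG T G) PG_le"
    by (rule ccc_if_countable_linked_cover[OF countable_types cover same_type_compatible])
  moreover have "\<not> adds_dominating_real (PG T G) PG_le"
    by (rule no_dominating_real_if_countable_limit_cover[OF PG_le_refl PG_le_trans
          countable_types cover same_type_limit])
  ultimately show ?thesis ..
qed

end
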